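(* Let $p$ be a prime and $A_*$ a graded commutative algebra over $\mathbb F_p$. Then $D_1(G_p(A_* ))=\Gamma_1(G_p(A_* ))\subset G_p^{(0.5)}(A_* )$, and for every positive integer $k$, $$D_{k+1}(G_p(A_* ))\subset G_p^{(2k)}(A_* ),\qquad \Gamma_{k+1}(G_p(A_* ))\subset G_p^{(k+0.5)}(A_* ).$$
   Context: Graded commutative means $ab=(-1)^{\deg a\deg b}ba$. If $p=2$, $G_2(A_* )$ is the set of power series $\alpha(X)=\sum_{i\ge0}\alpha_iX^{2^i}\in A_*[[X]]$ ($X$ of degree $-1$) with $\alpha_i\in A_{2^i-1}$ and $\alpha_0=1$; in this case put $\epsilon=0$. If $p$ is odd, let $\epsilon$ have degree $-1$ with $\epsilon^2=0$, $X$ degree $-2$, and $G_p(A_* )$ is the set of $\alpha(X)=\sum_{i\ge0}\alpha_iX^{p^i}\in (A_*\otimes_{\mathbb F_p}\mathbb F_p[\epsilon]/(\epsilon^2))[[X]]$ with $\alpha_i$ homogeneous of degree $2(p^i-1)$ and $\alpha_0-1\in(\epsilon)$. The group law is $\alpha(X)\cdot\beta(X)=\beta(\alpha(X))$, i.e. the coefficient of $X^{p^i}$ in $\alpha\cdot\beta$ is $\sum_{j=0}^i\alpha_{i-j}^{p^j}\beta_j$; the identity is $X$. For an integer $k\ge0$, $G_p^{(k)}(A_* )$ is the subgroup of elements of the form $X+\sum_{i\ge k+1}\alpha_iX^{p^i}$, and $G_p^{(k+0.5)}(A_* )$ is the subgroup of elements of the form $X+\sum_{i\ge k+1}\alpha_iX^{p^i}$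 with $\alpha_{k+1}\in(\epsilon)$. For a group $G$, $D_0(G)=\Gamma_0(G)=G$, $D_{k+1}(G)=[D_k(G),D_k(G)]$ and $\Gamma_{k+1}(G)=[\Gamma_k(G),G]$, where $[H,K]$ is the subgroup generated by commutators. *)

theory Defs
  imports "HOL-Algebra.Algebra"
begin

text \<open>A (Z-)graded commutative algebra over F_p: a ring R (HOL-Algebra) with a grading
  A :: int => 'a set such that R is the internal direct sum of the additive subgroups A n,
  A m * A n is contained in A (m+n), the unit lies in A 0, multiplication is graded
  commutative (ab = (-1)^(deg a deg b) ba), and p * 1 = 0 (so R is an F_p-algebra,
  p prime; such an algebra structure is unique).\<close>

definition graded_comm_algebra ::
  "nat \<Rightarrow> ('a, 'b) ring_scheme \<Rightarrow> (int \<Rightarrow> 'a set) \<Rightarrow> bool" where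
  "graded_comm_algebra p R A \<longleftrightarrow>
     ring R
   \<and> (\<forall>n. additive_subgroup (A n) R)
   \<and> (\<forall>x \<in> carrier R. \<exists>I f. finite I \<and> (\<forall>n\<in>I. f n \<in> A n) \<and> x = (\<Oplus>\<^bsub>R\<^esub> n\<in>I. f n))
   \<and> (\<forall>I f. finite I \<and> (\<forall>n\<in>I. f n \<in> A n) \<and> (\<Oplus>\<^bsub>R\<^esub> n\<in>I. f n) = \<zero>\<^bsub>R\<^esub>
          \<longrightarrow> (\<forall>n\<in>I. f n = \<zero>\<^bsub>R\<^esub>))
   \<and> \<one>\<^bsub>R\<^esub> \<in> A 0
   \<and> (\<forall>m n a b. a \<in> A m \<and> b \<in> A n \<longrightarrow> a \<otimes>\<^bsub>R\<^esub> b \<in> A (m + n))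
   \<and> (\<forall>m n a b. a \<in> A m \<and> b \<in> A n \<longrightarrow>
        a \<otimes>\<^bsub>R\<^esub> b = (if even (m * n) then b \<otimes>\<^bsub>R\<^esub> a else \<ominus>\<^bsub>R\<^esub> (b \<otimes>\<^bsub>R\<^esub> a)))
   \<and> add_pow R p \<one>\<^bsub>R\<^esub> = \<zero>\<^bsub>R\<^esub>"

text \<open>An element a + eps b of A_* (x) F_p[eps]/(eps^2) is represented by the pair (a, b).
  For p = 2 we have eps = 0, so only pairs (a, 0) occur.  All coefficients alpha_i have
  even degree (for p odd), so the product in A_* (x) F_p[eps]/(eps^2) of two such elements is
  (a + eps b)(c + eps d) = ac + eps (ad + bc) (no Koszul signs occur).\<close>

definition eps_mult :: "('a, 'b) ring_scheme \<Rightarrow> 'a \<times> 'a \<Rightarrow> 'a \<times> 'a \<Rightarrow> 'a \<times> 'a" where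
  "eps_mult R x y = (fst x \<otimes>\<^bsub>R\<^esub> fst y, fst x \<otimes>\<^bsub>R\<^esub> snd y \<oplus>\<^bsub>R\<^esub> snd x \<otimes>\<^bsub>R\<^esub> fst y)"

definition eps_pow :: "('a, 'b) ring_scheme \<Rightarrow> 'a \<times> 'a \<Rightarrow> nat \<Rightarrow> 'a \<times> 'a" where
  "eps_pow R x n = (eps_mult R x ^^ n) (\<one>\<^bsub>R\<^esub>, \<zero>\<^bsub>R\<^esub>)"

text \<open>Degree of the coefficient alpha_i (the coefficient of X^(p^i)).\<close>
definition coeff_deg :: "nat \<Rightarrow> nat \<Rightarrow> int" where
  "coeff_deg p i = (if p = 2 then int (2 ^ i) - 1 else 2 * (int (p ^ i) - 1))"

text \<open>alpha = (alpha_i)_i, alpha_i = a_i + eps b_i with a_i homogeneous of degree coeff_deg p i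
  and eps b_i of the same degree (eps has degree -1, so b_i has degree coeff_deg p i + 1);
  alpha_0 - 1 in (eps), i.e. a_0 = 1.  For p = 2, eps = 0, i.e. b_i = 0.\<close>
definition Gp_carrier :: "nat \<Rightarrow> ('a, 'b) ring_scheme \<Rightarrow> (int \<Rightarrow> 'a set) \<Rightarrow> (nat \<Rightarrow> 'a \<times> 'a) set" where
  "Gp_carrier p R A = {\<alpha>.
      (\<forall>i. fst (\<alpha> i) \<in> A (coeff_deg p i))
    \<and> (\<forall>i. snd (\<alpha> i) \<in> (if p = 2 then {\<zero>\<^bsub>R\<^esub>} else A (coeff_deg p i + 1)))
    \<and> fst (\<alpha> 0) = \<one>\<^bsub>R\<^esub>}"

text \<open>Group law: coefficient i of alpha * beta = beta(alpha(X)) is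
  sum_{j=0..i} alpha_{i-j}^(p^j) beta_j.\<close>
definition Gp_mult :: "nat \<Rightarrow> ('a, 'b) ring_scheme \<Rightarrow> (nat \<Rightarrow> 'a \<times> 'a) \<Rightarrow> (nat \<Rightarrow> 'a \<times> 'a) \<Rightarrow> (nat \<Rightarrow> 'a \<times> 'a)" where
  "Gp_mult p R \<alpha> \<beta> = (\<lambda>i.
     ((\<Oplus>\<^bsub>R\<^esub> j\<in>{..i}. fst (eps_mult R (eps_pow R (\<alpha> (i - j)) (p ^ j)) (\<beta> j))),
      (\<Oplus>\<^bsub>R\<^esub> j\<in>{..i}. snd (eps_mult R (eps_pow R (\<alpha> (i - j)) (p ^ j)) (\<beta> j)))))"

definition Gp :: "nat \<Rightarrow> ('a, 'b) ring_scheme \<Rightarrow> (int \<Rightarrow> 'a set) \<Rightarrow> (nat \<Rightarrow> 'a \<times> 'a) monoid" where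
  "Gp p R A = \<lparr> carrier = Gp_carrier p R A,
                monoid.mult = Gp_mult p R,
                monoid.one = (\<lambda>i. if i = 0 then (\<one>\<^bsub>R\<^esub>, \<zero>\<^bsub>R\<^esub>) else (\<zero>\<^bsub>R\<^esub>, \<zero>\<^bsub>R\<^esub>)) \<rparr>"

text \<open>G_p^(k): elements X + sum_{i >= k+1} alpha_i X^(p^i).\<close>
definition Gp_filt :: "nat \<Rightarrow> ('a, 'b) ring_scheme \<Rightarrow> (int \<Rightarrow> 'a set) \<Rightarrow> nat \<Rightarrow> (nat \<Rightarrow> 'a \<times> 'a) set" where
  "Gp_filt p R A k = {\<alpha> \<in> Gp_carrier p R A.
      \<alpha> 0 = (\<one>\<^bsub>R\<^esub>, \<zero>\<^bsub>R\<^esub>) \<and> (\<forall>i. 1 \<le> i \<and> i \<le> k \<longrightarrow> \<alpha> i = (\<zero>\<^bsub>R\<^esub>, \<zero>\<^bsub>R\<^esub>))}"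

text \<open>G_p^(k+0.5): elements of G_p^(k) with alpha_(k+1) in (eps).\<close>
definition Gp_filt_half :: "nat \<Rightarrow> ('a, 'b) ring_scheme \<Rightarrow> (int \<Rightarrow> 'a set) \<Rightarrow> nat \<Rightarrow> (nat \<Rightarrow> 'a \<times> 'a) set" where
  "Gp_filt_half p R A k = {\<alpha> \<in> Gp_filt p R A k. fst (\<alpha> (Suc k)) = \<zero>\<^bsub>R\<^esub>}"

definition derived_series :: "('a, 'b) monoid_scheme \<Rightarrow> nat \<Rightarrow> 'a set" where
  "derived_series G k = (derived G ^^ k) (carrier G)"

text \<open>Gamma_0(G) = G, Gamma_(k+1)(G) = [Gamma_k(G), G].\<close>
definition comm_subgroup :: "('a, 'b) monoid_scheme \<Rightarrow> 'a set \<Rightarrow> 'a set \<Rightarrow> 'a set" where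
  "comm_subgroup G H K = generate G
     (\<Union>h \<in> H. \<Union>k \<in> K. {h \<otimes>\<^bsub>G\<^esub> k \<otimes>\<^bsub>G\<^esub> inv\<^bsub>G\<^esub> h \<otimes>\<^bsub>G\<^esub> inv\<^bsub>G\<^esub> k})"

definition lower_central :: "('a, 'b) monoid_scheme \<Rightarrow> nat \<Rightarrow> 'a set" where
  "lower_central G k = ((\<lambda>H. comm_subgroup G H (carrier G)) ^^ k) (carrier G)"

end

theory Submission
  imports Defs "HOL-Computational_Algebra.Primes"
begin

text \<open>
  All coefficients of G_p(A_*) lie in the commutative ring of central dual numbers a + \<epsilon>b
  (a central, \<epsilon>^2 = 0). It has characteristic p, so x \<mapsto> x^p is additive there and kills \<epsilon>.
  The group law is composition of additive series, and u lies in G^(N) iff u y agrees with y in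
  all coefficients of index at most N. Hence a commutator [x, y] lies in G^(N) iff x y and y x
  agree up to index N, and in G^(N+0.5) iff moreover their coefficients of index N + 1 agree
  modulo \<epsilon>.

  Comparing coefficients: any two elements commute in this sense to order 0.5; an element of
  G^(k+0.5) commutes with every element to order k + 1.5; and two elements x, y of G^(m+0.5)
  commute to order 2m + 2, because the only cross term that could survive,
  x_(m+1)^(p^(m+1)) y_(m+1), vanishes as x_(m+1) \<in> (\<epsilon>). Induction along the lower central
  and the derived series, using G^(2k) \<subseteq> G^(2k-0.5), gives the bounds.
\<close>

section \<open>Finite sums and the Frobenius map\<close>

context abelian_monoid
begin

lemma finsum_eq_single:
  assumes "finite I" "a \<in> I" "f \<in> I \<rightarrow> carrier G" "\<And>j. j \<in> I \<Longrightarrow> j \<noteq> a \<Longrightarrow> f j = \<zero>"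
  shows "finsum G f I = f a"
  using assms
  by (subst add.finprod_mono_neutral_cong_right[of I "{a}" f f])
    (auto simp: finsum_insert Pi_iff)

lemma finsum_eq_pair:
  assumes "finite I" "a \<in> I" "b \<in> I" "a \<noteq> b" "f \<in> I \<rightarrow> carrier G"
    "\<And>j. j \<in> I \<Longrightarrow> j \<noteq> a \<Longrightarrow> j \<noteq> b \<Longrightarrow> f j = \<zero>"
  shows "finsum G f I = f a \<oplus> f b"
  using assms
  by (subst add.finprod_mono_neutral_cong_right[of I "{a, b}" f f])
    (auto simp: finsum_insert Pi_iff)

lemma finsum_eq_triple:
  assumes "finite I" "a \<in> I" "b \<in> I" "c \<in> I" "a \<noteq> b" "a \<noteq> c" "b \<noteq> c" "f \<in> I \<rightarrow> carrier G"
    "\<And>j. j \<in> I \<Longrightarrow> j \<noteq> a \<Longrightarrow> j \<noteq> b \<Longrightarrow> j \<noteq> c \<Longrightarrow> f j = \<zero>"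
  shows "finsum G f I = f a \<oplus> (f b \<oplus> f c)"
  using assms
  by (subst add.finprod_mono_neutral_cong_right[of I "{a, b, c}" f f])
    (auto simp: finsum_insert Pi_iff)

lemma finsum_triangle_swap:
  assumes h: "\<And>j m. h j m \<in> carrier G"
  shows "(\<Oplus>j\<in>{..i::nat}. \<Oplus>l\<in>{..i - j}. h j (j + l)) = (\<Oplus>m\<in>{..i}. \<Oplus>j\<in>{..m}. h j m)"
proof (induction i)
  case 0
  show ?case using h by simp
next
  case (Suc i)
  have inner: "(\<Oplus>l\<in>{..Suc i - j}. h j (j + l)) = h j (Suc i) \<oplus> (\<Oplus>l\<in>{..i - j}. h j (j + l))"
    if "j \<le> i" for j
    using h that by (simp add: Suc_diff_le)
  have "(\<Oplus>j\<in>{..i}. \<Oplus>l\<in>{..Suc i - j}. h j (j + l))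
      = (\<Oplus>j\<in>{..i}. h j (Suc i) \<oplus> (\<Oplus>l\<in>{..i - j}. h j (j + l)))"
    using h inner by (intro finsum_cong) auto
  then have "(\<Oplus>j\<in>{..i}. \<Oplus>l\<in>{..Suc i - j}. h j (j + l))
      = (\<Oplus>j\<in>{..i}. h j (Suc i)) \<oplus> (\<Oplus>m\<in>{..i}. \<Oplus>j\<in>{..m}. h j m)"
    using h by (simp add: finsum_addf Suc)
  then show ?case
    using h by (simp add: finsum_Suc a_assoc)
qed

end

context cring
begin

lemma binomial_expansion:
  assumes x: "x \<in> carrier R" and y: "y \<in> carrier R"
  shows "(x \<oplus> y) [^] n = (\<Oplus>k\<in>{..n}. add_pow R (n choose k) (x [^] k \<otimes> y [^] (n - k)))"
proof (induction n)
  case 0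
  show ?case using x y by simp
next
  case (Suc n)
  define S where "S = (\<Oplus>k\<in>{..n}. add_pow R (n choose k) (x [^] k \<otimes> y [^] (n - k)))"
  define T where "T = (\<Oplus>k\<in>{..n}. add_pow R (n choose Suc k) (x [^] Suc k \<otimes> y [^] (n - k)))"
  have S: "S \<in> carrier R" and T: "T \<in> carrier R"
    unfolding S_def T_def using x y by auto
  have Sx: "S \<otimes> x = (\<Oplus>k\<in>{..n}. add_pow R (n choose k) (x [^] Suc k \<otimes> y [^] (n - k)))"
    unfolding S_def using x y
    by (subst finsum_ldistr) (auto intro!: finsum_cong simp: add_pow_ldistr add_pow_rdistr m_ac)
  have "S \<otimes> y = (\<Oplus>k\<in>{..Suc n}. add_pow R (n choose k) (x [^] k \<otimes> y [^] (Suc n - k)))"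
    unfolding S_def using x y
    by (subst finsum_ldistr)
      (auto intro!: finsum_cong simp: add_pow_ldistr add_pow_rdistr m_ac Suc_diff_le binomial_eq_0)
  also have "\<dots> = T \<oplus> y [^] Suc n"
    unfolding T_def using x y by (subst finsum_Suc2) auto
  finally have Sy: "S \<otimes> y = T \<oplus> y [^] Suc n" .
  have "(\<Oplus>k\<in>{..Suc n}. add_pow R (Suc n choose k) (x [^] k \<otimes> y [^] (Suc n - k)))
      = (\<Oplus>k\<in>{..n}. add_pow R (n choose k) (x [^] Suc k \<otimes> y [^] (n - k))
           \<oplus> add_pow R (n choose Suc k) (x [^] Suc k \<otimes> y [^] (n - k))) \<oplus> y [^] Suc n"
    using x y by (subst finsum_Suc2) (auto intro!: finsum_cong simp: add.nat_pow_mult)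
  also have "\<dots> = S \<otimes> x \<oplus> T \<oplus> y [^] Suc n"
    unfolding Sx T_def using x y by (subst finsum_addf) auto
  also have "\<dots> = S \<otimes> (x \<oplus> y)"
    using S T x y Sy by (simp add: r_distr a_assoc)
  finally show ?case
    using Suc S_def by simp
qed

lemma freshman_dream:
  assumes x: "x \<in> carrier R" and y: "y \<in> carrier R"
    and p: "Factorial_Ring.prime (p::nat)" and char: "add_pow R p \<one> = \<zero>"
  shows "(x \<oplus> y) [^] p = x [^] p \<oplus> y [^] p"
proof -
  have vanish: "add_pow R (p choose k) (x [^] k \<otimes> y [^] (p - k)) = \<zero>" if "0 < k" "k < p" for k
  proof -
    have "p dvd (p choose k)"
      using dvd_choose_prime[of k p] that p by auto
    then obtain q where q: "p choose k = p * q" by (elim dvdE)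
    have "add_pow R p z = \<zero>" if "z \<in> carrier R" for z
      using add_pow_ldistr[of \<one> z p] char that by simp
    then show ?thesis
      using q x y add.nat_pow_pow[of "x [^] k \<otimes> y [^] (p - k)" q p] by (simp add: mult.commute)
  qed
  have p0: "0 < p" using p prime_gt_0_nat by blast
  have "(x \<oplus> y) [^] p = (\<Oplus>k\<in>{..p}. add_pow R (p choose k) (x [^] k \<otimes> y [^] (p - k)))"
    by (rule binomial_expansion[OF x y])
  also have "\<dots> = add_pow R (p choose 0) (x [^] (0::nat) \<otimes> y [^] (p - 0))
                   \<oplus> add_pow R (p choose p) (x [^] p \<otimes> y [^] (p - p))"
    by (rule finsum_eq_pair) (use x y vanish p0 in auto)
  finally show ?thesis
    using x y by (simp add: a_comm)
qed

end

lemma (in group) commutator_mult_swap: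
  assumes x: "x \<in> carrier G" and y: "y \<in> carrier G"
  shows "x \<otimes> y \<otimes> inv x \<otimes> inv y \<otimes> (y \<otimes> x) = x \<otimes> y"
proof -
  have "inv y \<otimes> (y \<otimes> x) = x"
    using x y by (simp add: m_assoc[symmetric])
  then show ?thesis
    using x y by (simp add: m_assoc)
qed

section \<open>Composition of additive power series in characteristic \<open>p\<close>\<close>

locale cring_char_p = cring R for R (structure) +
  fixes p :: nat
  assumes prime_p: "Factorial_Ring.prime p"
    and char_p: "add_pow R p \<one> = \<zero>"
begin

definition frob :: "nat \<Rightarrow> 'a \<Rightarrow> 'a" where
  "frob j x = x [^] (p ^ j)"

lemma frob_closed [simp]: "x \<in> carrier R \<Longrightarrow> frob j x \<in> carrier R"
  by (simp add: frob_def)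

lemma frob_0 [simp]: "x \<in> carrier R \<Longrightarrow> frob 0 x = x"
  by (simp add: frob_def)

lemma frob_Suc: "x \<in> carrier R \<Longrightarrow> frob (Suc j) x = frob j (x [^] p)"
  by (simp add: frob_def nat_pow_pow mult.commute)

lemma frob_frob: "x \<in> carrier R \<Longrightarrow> frob j (frob l x) = frob (l + j) x"
  by (simp add: frob_def nat_pow_pow power_add)

lemma frob_one [simp]: "frob j \<one> = \<one>"
  by (simp add: frob_def)

lemma frob_zero [simp]: "frob j \<zero> = \<zero>"
  using prime_gt_0_nat[OF prime_p] by (simp add: frob_def nat_pow_zero)

lemma frob_mult: "x \<in> carrier R \<Longrightarrow> y \<in> carrier R \<Longrightarrow> frob j (x \<otimes> y) = frob j x \<otimes> frob j y"
  by (simp add: frob_def nat_pow_distrib)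

lemma frob_add: "x \<in> carrier R \<Longrightarrow> y \<in> carrier R \<Longrightarrow> frob j (x \<oplus> y) = frob j x \<oplus> frob j y"
  by (induction j arbitrary: x y) (simp_all add: frob_Suc freshman_dream[OF _ _ prime_p char_p])

lemma frob_finsum:
  assumes "finite I" "f \<in> I \<rightarrow> carrier R"
  shows "frob j (finsum R f I) = (\<Oplus>i\<in>I. frob j (f i))"
  using assms by (induction I rule: finite_induct) (auto simp: finsum_insert frob_add Pi_iff)

text \<open>\<open>comp_mult a b i\<close> is the coefficient of X^(p^i) in b(a(X)) for the additive series
  a(X) = \<Sum> a_i X^(p^i) and b(X) = \<Sum> b_i X^(p^i); it is associative because \<^const>\<open>frob\<close> is
  additive.\<close>

definition comp_mult :: "(nat \<Rightarrow> 'a) \<Rightarrow> (nat \<Rightarrow> 'a) \<Rightarrow> nat \<Rightarrow> 'a" where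
  "comp_mult a b i = (\<Oplus>j\<in>{..i}. frob j (a (i - j)) \<otimes> b j)"

definition comp_unit :: "nat \<Rightarrow> 'a" where
  "comp_unit i = (if i = 0 then \<one> else \<zero>)"

lemma comp_unit_closed: "comp_unit \<in> UNIV \<rightarrow> carrier R"
  by (simp add: comp_unit_def)

lemma comp_mult_closed:
  "a \<in> UNIV \<rightarrow> carrier R \<Longrightarrow> b \<in> UNIV \<rightarrow> carrier R \<Longrightarrow> comp_mult a b \<in> UNIV \<rightarrow> carrier R"
  unfolding comp_mult_def by (auto intro!: finsum_closed simp: Pi_iff)

lemma comp_mult_0:
  "a \<in> UNIV \<rightarrow> carrier R \<Longrightarrow> b \<in> UNIV \<rightarrow> carrier R \<Longrightarrow> comp_mult a b 0 = a 0 \<otimes> b 0"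
  by (auto simp: comp_mult_def finsum_insert Pi_iff)

lemma comp_mult_assoc:
  assumes a: "a \<in> UNIV \<rightarrow> carrier R" and b: "b \<in> UNIV \<rightarrow> carrier R" and c: "c \<in> UNIV \<rightarrow> carrier R"
  shows "comp_mult (comp_mult a b) c = comp_mult a (comp_mult b c)"
proof
  fix i
  have [simp]: "a k \<in> carrier R" "b k \<in> carrier R" "c k \<in> carrier R"
      "comp_mult a b k \<in> carrier R" for k
    using a b c comp_mult_closed[OF a b] by auto
  define h where "h j m = frob m (a (i - m)) \<otimes> frob j (b (m - j)) \<otimes> c j" for j m
  have h: "h j m \<in> carrier R" for j m
    unfolding h_def by simp
  have inner: "frob j (comp_mult a b (i - j)) \<otimes> c j = (\<Oplus>l\<in>{..i - j}. h j (j + l))" for j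
  proof -
    have frob_coeff: "frob j (comp_mult a b (i - j))
        = (\<Oplus>l\<in>{..i - j}. frob (l + j) (a (i - j - l)) \<otimes> frob j (b l))"
      unfolding comp_mult_def
      by (subst frob_finsum) (auto intro!: finsum_cong simp: frob_mult frob_frob)
    show ?thesis
      unfolding frob_coeff h_def
      by (subst finsum_ldistr) (auto intro!: finsum_cong simp: add.commute diff_diff_left)
  qed
  have "comp_mult (comp_mult a b) c i = (\<Oplus>j\<in>{..i}. \<Oplus>l\<in>{..i - j}. h j (j + l))"
    unfolding comp_mult_def[of "comp_mult a b"] using inner h
    by (intro finsum_cong) (auto simp del: finsum_Suc)
  also have "\<dots> = (\<Oplus>m\<in>{..i}. \<Oplus>j\<in>{..m}. h j m)"
    by (rule finsum_triangle_swap[OF h])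
  also have "\<dots> = comp_mult a (comp_mult b c) i"
    unfolding comp_mult_def h_def by (auto intro!: finsum_cong simp: finsum_rdistr m_assoc)
  finally show "comp_mult (comp_mult a b) c i = comp_mult a (comp_mult b c) i" .
qed

text \<open>The guard in the recursive call holds throughout the range of summation; it only
  makes the termination argument visible to the function package.\<close>

function comp_inv :: "(nat \<Rightarrow> 'a) \<Rightarrow> nat \<Rightarrow> 'a" where
  "comp_inv a n = (if n = 0 then inv (a 0) else
     \<ominus> (\<Oplus>j\<in>{1..n}. frob j (if j \<in> {1..n} then comp_inv a (n - j) else \<zero>) \<otimes> a j)
       \<otimes> inv (a 0))"
  by auto
termination by (relation "measure snd") auto

declare comp_inv.simps [simp del]

lemma comp_inv_closed:
  assumes a: "a \<in> UNIV \<rightarrow> carrier R" "a 0 \<in> Units R"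
  shows "comp_inv a n \<in> carrier R"
proof (induction n rule: less_induct)
  case (less n)
  then show ?case
    using a by (subst comp_inv.simps) (auto intro!: finsum_closed simp: Pi_iff)
qed

lemma comp_inv_Suc:
  assumes a: "a \<in> UNIV \<rightarrow> carrier R" "a 0 \<in> Units R" and "0 < n"
  shows "comp_inv a n = \<ominus> (\<Oplus>j\<in>{1..n}. frob j (comp_inv a (n - j)) \<otimes> a j) \<otimes> inv (a 0)"
proof -
  have guard: "(\<Oplus>j\<in>{1..n}. frob j (if j \<in> {1..n} then comp_inv a (n - j) else \<zero>) \<otimes> a j)
      = (\<Oplus>j\<in>{1..n}. frob j (comp_inv a (n - j)) \<otimes> a j)"
    using a comp_inv_closed[OF a] by (intro finsum_cong) (auto simp: Pi_iff)
  show ?thesis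
    using \<open>0 < n\<close> by (subst comp_inv.simps) (simp only: guard, simp)
qed

lemma comp_inv_0: "comp_inv a 0 = inv (a 0)"
  by (subst comp_inv.simps) simp

lemma comp_inv_mult:
  assumes a: "a \<in> UNIV \<rightarrow> carrier R" "a 0 \<in> Units R"
  shows "comp_mult (comp_inv a) a = comp_unit"
proof
  fix i
  have [simp]: "a k \<in> carrier R" "comp_inv a k \<in> carrier R" "inv (a 0) \<in> carrier R" for k
    using a comp_inv_closed[OF a] by auto
  show "comp_mult (comp_inv a) a i = comp_unit i"
  proof (cases "i = 0")
    case True
    then show ?thesis
      using a by (simp add: comp_mult_0 comp_inv_0 comp_unit_def Pi_iff)
  next
    case False
    define S where "S = (\<Oplus>j\<in>{1..i}. frob j (comp_inv a (i - j)) \<otimes> a j)"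
    have S: "S \<in> carrier R"
      unfolding S_def by (auto intro!: finsum_closed)
    have inv_i: "comp_inv a i = \<ominus> S \<otimes> inv (a 0)"
      using comp_inv_Suc[OF a] False unfolding S_def by simp
    have "{..i} = insert 0 {1..i}"
      by auto
    then have "comp_mult (comp_inv a) a i = comp_inv a i \<otimes> a 0 \<oplus> S"
      unfolding comp_mult_def S_def by (simp add: finsum_insert)
    also have "\<dots> = \<ominus> S \<oplus> S"
      using a S by (simp add: inv_i m_assoc)
    finally show ?thesis
      using False S by (simp add: comp_unit_def l_neg)
  qed
qed

lemma comp_mult_trunc:
  assumes u: "u \<in> UNIV \<rightarrow> carrier R" "\<forall>i\<le>N. u i = comp_unit i"
    and b: "b \<in> UNIV \<rightarrow> carrier R" and "i \<le> N"
  shows "comp_mult u b i = b i"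
proof -
  have "comp_mult u b i = frob i (u (i - i)) \<otimes> b i"
    unfolding comp_mult_def using assms
    by (intro finsum_eq_single) (auto simp: comp_unit_def Pi_iff)
  then show ?thesis
    using assms by (simp add: comp_unit_def Pi_iff)
qed

lemma comp_unit_mult:
  assumes "b \<in> UNIV \<rightarrow> carrier R"
  shows "comp_mult comp_unit b = b"
proof
  fix i
  show "comp_mult comp_unit b i = b i"
    using comp_mult_trunc[OF comp_unit_closed _ assms, of i i] by simp
qed

lemma comp_mult_trunc_next:
  assumes u: "u \<in> UNIV \<rightarrow> carrier R" "\<forall>i\<le>N. u i = comp_unit i"
    and b: "b \<in> UNIV \<rightarrow> carrier R"
  shows "comp_mult u b (Suc N) = u (Suc N) \<otimes> b 0 \<oplus> b (Suc N)"
proof -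
  have "comp_mult u b (Suc N)
      = frob 0 (u (Suc N - 0)) \<otimes> b 0 \<oplus> frob (Suc N) (u (Suc N - Suc N)) \<otimes> b (Suc N)"
    unfolding comp_mult_def using assms
    by (intro finsum_eq_pair) (auto simp: comp_unit_def Pi_iff)
  then show ?thesis
    using assms by (simp add: comp_unit_def Pi_iff)
qed

lemma comp_mult_trunc_cancel:
  assumes u: "u \<in> UNIV \<rightarrow> carrier R" and b: "b \<in> UNIV \<rightarrow> carrier R" "b 0 \<in> Units R"
    and eq: "\<forall>i\<le>N. comp_mult u b i = b i"
  shows "\<forall>i\<le>N. u i = comp_unit i"
  using eq
proof (induction N)
  case 0
  have "b 0 \<otimes> u 0 = b 0 \<otimes> \<one>"
    using 0 u b by (simp add: comp_mult_0 m_comm Pi_iff)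
  then have "u 0 = \<one>"
    using u b by (metis Pi_iff UNIV_I Units_l_cancel one_closed)
  then show ?case
    by (simp add: comp_unit_def)
next
  case (Suc N)
  then have low: "\<forall>i\<le>N. u i = comp_unit i"
    by simp
  have "b 0 \<otimes> u (Suc N) \<oplus> b (Suc N) = b 0 \<otimes> \<zero> \<oplus> b (Suc N)"
    using comp_mult_trunc_next[OF u low b(1)] Suc.prems u b by (simp add: m_comm Pi_iff)
  then have "b 0 \<otimes> u (Suc N) = b 0 \<otimes> \<zero>"
    using u b by (simp add: Pi_iff)
  then have "u (Suc N) = \<zero>"
    using u b by (metis Pi_iff UNIV_I Units_l_cancel zero_closed)
  then show ?case
    using low by (auto simp: comp_unit_def le_Suc_eq)
qed

lemma comp_mult_trunc_right:
  assumes u: "u \<in> UNIV \<rightarrow> carrier R" "\<forall>i\<le>N. u i = comp_unit i"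
    and b: "b \<in> UNIV \<rightarrow> carrier R" and "i \<le> N"
  shows "comp_mult b u i = b i"
proof -
  have "comp_mult b u i = frob 0 (b (i - 0)) \<otimes> u 0"
    unfolding comp_mult_def using assms
    by (intro finsum_eq_single) (auto simp: comp_unit_def Pi_iff)
  then show ?thesis
    using assms by (simp add: comp_unit_def Pi_iff)
qed

lemma comp_mult_trunc_right_next:
  assumes u: "u \<in> UNIV \<rightarrow> carrier R" "\<forall>i\<le>N. u i = comp_unit i"
    and b: "b \<in> UNIV \<rightarrow> carrier R"
  shows "comp_mult b u (Suc N) = b (Suc N) \<oplus> frob (Suc N) (b 0) \<otimes> u (Suc N)"
proof -
  have "comp_mult b u (Suc N)
      = frob 0 (b (Suc N - 0)) \<otimes> u 0 \<oplus> frob (Suc N) (b (Suc N - Suc N)) \<otimes> u (Suc N)"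
    unfolding comp_mult_def using assms
    by (intro finsum_eq_pair) (auto simp: comp_unit_def Pi_iff)
  then show ?thesis
    using assms by (simp add: comp_unit_def Pi_iff)
qed

lemma comp_mult_eq_add:
  assumes a: "a \<in> UNIV \<rightarrow> carrier R" "a 0 = \<one>" and b: "b \<in> UNIV \<rightarrow> carrier R" "b 0 = \<one>"
    and "0 < i" and cross: "\<And>j. 0 < j \<Longrightarrow> j < i \<Longrightarrow> frob j (a (i - j)) \<otimes> b j = \<zero>"
  shows "comp_mult a b i = a i \<oplus> b i"
proof -
  have "comp_mult a b i = frob 0 (a (i - 0)) \<otimes> b 0 \<oplus> frob i (a (i - i)) \<otimes> b i"
    unfolding comp_mult_def using assms by (intro finsum_eq_pair) (auto simp: Pi_iff)
  then show ?thesis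
    using assms by (simp add: Pi_iff)
qed

end

section \<open>Central dual numbers\<close>

definition ring_center :: "('a, 'b) ring_scheme \<Rightarrow> 'a set" where
  "ring_center R = {x \<in> carrier R. \<forall>y \<in> carrier R. x \<otimes>\<^bsub>R\<^esub> y = y \<otimes>\<^bsub>R\<^esub> x}"

text \<open>Pairs \<open>(a, b)\<close> are \<open>a + \<epsilon>b\<close> as in \<^const>\<open>eps_mult\<close>; restricting \<open>a\<close> to the center makes the
  multiplication commutative.\<close>

definition dual_ring :: "('a, 'b) ring_scheme \<Rightarrow> ('a \<times> 'a) ring" where
  "dual_ring R = \<lparr>carrier = ring_center R \<times> carrier R, monoid.mult = eps_mult R,
     one = (\<one>\<^bsub>R\<^esub>, \<zero>\<^bsub>R\<^esub>), ring.zero = (\<zero>\<^bsub>R\<^esub>, \<zero>\<^bsub>R\<^esub>),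
     add = (\<lambda>x y. (fst x \<oplus>\<^bsub>R\<^esub> fst y, snd x \<oplus>\<^bsub>R\<^esub> snd y))\<rparr>"

context ring
begin

lemma center_carrier: "x \<in> ring_center R \<Longrightarrow> x \<in> carrier R"
  by (simp add: ring_center_def)

lemma center_commute: "x \<in> ring_center R \<Longrightarrow> y \<in> carrier R \<Longrightarrow> x \<otimes> y = y \<otimes> x"
  by (simp add: ring_center_def)

lemma center_zero [simp]: "\<zero> \<in> ring_center R"
  and center_one [simp]: "\<one> \<in> ring_center R"
  by (simp_all add: ring_center_def)

lemma center_add: "x \<in> ring_center R \<Longrightarrow> y \<in> ring_center R \<Longrightarrow> x \<oplus> y \<in> ring_center R"
  by (simp add: ring_center_def l_distr r_distr)

lemma center_neg:
  assumes x: "x \<in> ring_center R"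
  shows "\<ominus> x \<in> ring_center R"
proof -
  have "\<ominus> x \<otimes> z = z \<otimes> \<ominus> x" if z: "z \<in> carrier R" for z
    using center_commute[OF x z] center_carrier[OF x] z by (simp add: l_minus r_minus)
  then show ?thesis
    using center_carrier[OF x] by (simp add: ring_center_def)
qed

lemma center_mult:
  assumes x: "x \<in> ring_center R" and y: "y \<in> ring_center R"
  shows "x \<otimes> y \<in> ring_center R"
proof -
  have xy: "x \<in> carrier R" "y \<in> carrier R"
    using x y by (simp_all add: center_carrier)
  have "x \<otimes> y \<otimes> z = z \<otimes> (x \<otimes> y)" if z: "z \<in> carrier R" for z
  proof -
    have "x \<otimes> y \<otimes> z = x \<otimes> z \<otimes> y"
      using xy z by (simp add: m_assoc center_commute[OF y z])
    also have "\<dots> = z \<otimes> (x \<otimes> y)"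
      using xy z by (simp add: m_assoc center_commute[OF x z])
    finally show ?thesis .
  qed
  then show ?thesis
    using xy by (simp add: ring_center_def)
qed

lemma dual_ring_simps:
  "carrier (dual_ring R) = ring_center R \<times> carrier R"
  "x \<otimes>\<^bsub>dual_ring R\<^esub> y = eps_mult R x y"
  "\<one>\<^bsub>dual_ring R\<^esub> = (\<one>, \<zero>)"
  "\<zero>\<^bsub>dual_ring R\<^esub> = (\<zero>, \<zero>)"
  "x \<oplus>\<^bsub>dual_ring R\<^esub> y = (fst x \<oplus> fst y, snd x \<oplus> snd y)"
  by (simp_all add: dual_ring_def)

lemma dual_ring_carrier_iff:
  "x \<in> carrier (dual_ring R) \<longleftrightarrow> fst x \<in> ring_center R \<and> snd x \<in> carrier R"
  by (cases x) (simp add: dual_ring_simps)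

lemma dual_ring_abelian_group: "abelian_group (dual_ring R)"
proof (rule abelian_groupI)
  fix x y z
  assume "x \<in> carrier (dual_ring R)" "y \<in> carrier (dual_ring R)" "z \<in> carrier (dual_ring R)"
  then have c: "fst x \<in> ring_center R" "snd x \<in> carrier R" "fst y \<in> ring_center R"
    "snd y \<in> carrier R" "fst z \<in> ring_center R" "snd z \<in> carrier R"
    and cc: "fst x \<in> carrier R" "fst y \<in> carrier R" "fst z \<in> carrier R"
    by (auto simp: dual_ring_carrier_iff center_carrier)
  show "x \<oplus>\<^bsub>dual_ring R\<^esub> y \<in> carrier (dual_ring R)"
    using c by (simp add: dual_ring_simps center_add)
  show "x \<oplus>\<^bsub>dual_ring R\<^esub> y \<oplus>\<^bsub>dual_ring R\<^esub> z = x \<oplus>\<^bsub>dual_ring R\<^esub> (y \<oplus>\<^bsub>dual_ring R\<^esub> z)"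
    using c cc by (simp add: dual_ring_simps a_assoc)
  show "x \<oplus>\<^bsub>dual_ring R\<^esub> y = y \<oplus>\<^bsub>dual_ring R\<^esub> x"
    using c cc by (simp add: dual_ring_simps a_comm)
  show "\<zero>\<^bsub>dual_ring R\<^esub> \<oplus>\<^bsub>dual_ring R\<^esub> x = x"
    using c cc by (simp add: dual_ring_simps)
  show "\<exists>y\<in>carrier (dual_ring R). y \<oplus>\<^bsub>dual_ring R\<^esub> x = \<zero>\<^bsub>dual_ring R\<^esub>"
    using c cc
    by (intro bexI[of _ "(\<ominus> fst x, \<ominus> snd x)"]) (auto simp: dual_ring_simps center_neg l_neg)
qed (simp add: dual_ring_simps)

lemma dual_ring_comm_monoid: "comm_monoid (dual_ring R)"
proof (rule comm_monoidI)
  fix x y z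
  assume "x \<in> carrier (dual_ring R)" "y \<in> carrier (dual_ring R)" "z \<in> carrier (dual_ring R)"
  then have c: "fst x \<in> ring_center R" "snd x \<in> carrier R" "fst y \<in> ring_center R"
    "snd y \<in> carrier R" "fst z \<in> ring_center R" "snd z \<in> carrier R"
    and cc: "fst x \<in> carrier R" "fst y \<in> carrier R" "fst z \<in> carrier R"
    by (auto simp: dual_ring_carrier_iff center_carrier)
  show "x \<otimes>\<^bsub>dual_ring R\<^esub> y \<in> carrier (dual_ring R)"
    using c cc by (simp add: dual_ring_simps eps_mult_def center_mult)
  show "x \<otimes>\<^bsub>dual_ring R\<^esub> y \<otimes>\<^bsub>dual_ring R\<^esub> z = x \<otimes>\<^bsub>dual_ring R\<^esub> (y \<otimes>\<^bsub>dual_ring R\<^esub> z)"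
    using c cc by (simp add: dual_ring_simps eps_mult_def m_assoc l_distr r_distr a_assoc)
  show "\<one>\<^bsub>dual_ring R\<^esub> \<otimes>\<^bsub>dual_ring R\<^esub> x = x"
    using c cc by (simp add: dual_ring_simps eps_mult_def)
  have "fst x \<otimes> fst y = fst y \<otimes> fst x" "fst x \<otimes> snd y = snd y \<otimes> fst x"
    "snd x \<otimes> fst y = fst y \<otimes> snd x"
    using c cc by (auto intro: center_commute[symmetric] center_commute)
  then show "x \<otimes>\<^bsub>dual_ring R\<^esub> y = y \<otimes>\<^bsub>dual_ring R\<^esub> x"
    using c cc by (simp add: dual_ring_simps eps_mult_def a_comm)
qed (simp add: dual_ring_simps)

lemma dual_ring_cring: "cring (dual_ring R)"
proof (rule cringI[OF dual_ring_abelian_group dual_ring_comm_monoid])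
  fix x y z
  assume "x \<in> carrier (dual_ring R)" "y \<in> carrier (dual_ring R)" "z \<in> carrier (dual_ring R)"
  then have "fst x \<in> carrier R" "snd x \<in> carrier R" "fst y \<in> carrier R" "snd y \<in> carrier R"
    "fst z \<in> carrier R" "snd z \<in> carrier R"
    by (auto simp: dual_ring_carrier_iff center_carrier)
  then show "(x \<oplus>\<^bsub>dual_ring R\<^esub> y) \<otimes>\<^bsub>dual_ring R\<^esub> z
      = x \<otimes>\<^bsub>dual_ring R\<^esub> z \<oplus>\<^bsub>dual_ring R\<^esub> y \<otimes>\<^bsub>dual_ring R\<^esub> z"
    by (simp add: dual_ring_simps eps_mult_def l_distr a_ac)
qed

lemma dual_ring_neg:
  assumes x: "x \<in> carrier (dual_ring R)"
  shows "\<ominus>\<^bsub>dual_ring R\<^esub> x = (\<ominus> fst x, \<ominus> snd x)"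
proof -
  interpret D: cring "dual_ring R" by (rule dual_ring_cring)
  have "(\<ominus> fst x, \<ominus> snd x) \<in> carrier (dual_ring R)"
    "(\<ominus> fst x, \<ominus> snd x) \<oplus>\<^bsub>dual_ring R\<^esub> x = \<zero>\<^bsub>dual_ring R\<^esub>"
    using x by (auto simp: dual_ring_carrier_iff dual_ring_simps center_neg center_carrier l_neg)
  then show ?thesis
    using x by (simp add: D.minus_equality)
qed

lemma dual_ring_add_pow:
  "add_pow (dual_ring R) (n::nat) x = (add_pow R n (fst x), add_pow R n (snd x))"
proof -
  interpret D: cring "dual_ring R" by (rule dual_ring_cring)
  show ?thesis by (induction n) (simp_all add: dual_ring_simps)
qed

lemma dual_ring_finsum:
  assumes "finite I" "f \<in> I \<rightarrow> carrier (dual_ring R)"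
  shows "finsum (dual_ring R) f I = (\<Oplus>i\<in>I. fst (f i), \<Oplus>i\<in>I. snd (f i))"
  using assms
proof (induction I rule: finite_induct)
  case empty
  interpret D: cring "dual_ring R" by (rule dual_ring_cring)
  show ?case by (simp add: dual_ring_simps)
next
  case (insert i I)
  interpret D: cring "dual_ring R" by (rule dual_ring_cring)
  have "fst (f j) \<in> carrier R" "snd (f j) \<in> carrier R" if "j \<in> insert i I" for j
    using funcset_mem[OF insert.prems that] by (auto simp: dual_ring_carrier_iff center_carrier)
  then show ?case
    using insert by (simp add: D.finsum_insert dual_ring_simps finsum_insert Pi_iff)
qed

lemma eps_pow_dual_ring:
  assumes "x \<in> carrier (dual_ring R)"
  shows "eps_pow R x n = x [^]\<^bsub>dual_ring R\<^esub> n"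
proof (induction n)
  case 0
  then show ?case by (simp add: eps_pow_def dual_ring_simps)
next
  case (Suc n)
  interpret D: cring "dual_ring R" by (rule dual_ring_cring)
  show ?case
    using Suc assms by (simp add: eps_pow_def dual_ring_simps(2)[symmetric] D.m_comm)
qed

lemma dual_ring_unit:
  assumes b: "b \<in> carrier R"
  shows "(\<one>, b) \<in> Units (dual_ring R)" and "inv\<^bsub>dual_ring R\<^esub> (\<one>, b) = (\<one>, \<ominus> b)"
proof -
  interpret D: cring "dual_ring R" by (rule dual_ring_cring)
  have c: "(\<one>, b) \<in> carrier (dual_ring R)" "(\<one>, \<ominus> b) \<in> carrier (dual_ring R)"
    using b by (simp_all add: dual_ring_carrier_iff)
  have inv: "(\<one>, b) \<otimes>\<^bsub>dual_ring R\<^esub> (\<one>, \<ominus> b) = \<one>\<^bsub>dual_ring R\<^esub>"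
    using b by (simp add: dual_ring_simps eps_mult_def l_neg)
  show "(\<one>, b) \<in> Units (dual_ring R)"
    using c inv D.m_comm[OF c] unfolding Units_def by auto
  show "inv\<^bsub>dual_ring R\<^esub> (\<one>, b) = (\<one>, \<ominus> b)"
    using c inv by (rule D.comm_inv_char)
qed

lemma dual_ring_char_p:
  fixes p :: nat
  assumes "Factorial_Ring.prime p" "add_pow R p \<one> = \<zero>"
  shows "cring_char_p (dual_ring R) p"
  using assms dual_ring_cring
  by (simp add: cring_char_p_def cring_char_p_axioms_def dual_ring_add_pow dual_ring_simps)

lemma dual_ring_pow_char:
  fixes p :: nat
  assumes p: "Factorial_Ring.prime p" "add_pow R p \<one> = \<zero>" and x: "x \<in> carrier (dual_ring R)"
  shows "x [^]\<^bsub>dual_ring R\<^esub> p = (fst x [^] p, \<zero>)"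
proof -
  interpret D: cring_char_p "dual_ring R" p
    by (rule dual_ring_char_p[OF p])
  have a: "fst x \<in> ring_center R" and b: "snd x \<in> carrier R"
    using x by (simp_all add: dual_ring_carrier_iff)
  have c: "(fst x, \<zero>) \<in> carrier (dual_ring R)" "(\<zero>, snd x) \<in> carrier (dual_ring R)"
    using a b by (simp_all add: dual_ring_carrier_iff)
  have pow_fst: "(fst x, \<zero>) [^]\<^bsub>dual_ring R\<^esub> n = (fst x [^] n, \<zero>)" for n :: nat
    using center_carrier[OF a] by (induction n) (simp_all add: dual_ring_simps eps_mult_def)
  define q where "q = p - 2"
  have q: "p = q + 2"
    using prime_gt_1_nat[OF p(1)] unfolding q_def by simp
  have square: "(\<zero>, snd x) \<otimes>\<^bsub>dual_ring R\<^esub> (\<zero>, snd x) = \<zero>\<^bsub>dual_ring R\<^esub>"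
    using b by (simp add: dual_ring_simps eps_mult_def)
  have "(\<zero>, snd x) [^]\<^bsub>dual_ring R\<^esub> p
      = (\<zero>, snd x) [^]\<^bsub>dual_ring R\<^esub> q \<otimes>\<^bsub>dual_ring R\<^esub> ((\<zero>, snd x) \<otimes>\<^bsub>dual_ring R\<^esub> (\<zero>, snd x))"
    using c by (simp add: q D.nat_pow_mult[symmetric] numeral_2_eq_2 D.m_assoc)
  also have "\<dots> = \<zero>\<^bsub>dual_ring R\<^esub>"
    using c by (simp add: square)
  finally have pow_snd: "(\<zero>, snd x) [^]\<^bsub>dual_ring R\<^esub> p = \<zero>\<^bsub>dual_ring R\<^esub>" .
  have "x = (fst x, \<zero>) \<oplus>\<^bsub>dual_ring R\<^esub> (\<zero>, snd x)"
    using center_carrier[OF a] b by (simp add: dual_ring_simps)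
  then have "x [^]\<^bsub>dual_ring R\<^esub> p
      = (fst x, \<zero>) [^]\<^bsub>dual_ring R\<^esub> p \<oplus>\<^bsub>dual_ring R\<^esub> (\<zero>, snd x) [^]\<^bsub>dual_ring R\<^esub> p"
    using D.freshman_dream[OF c D.prime_p D.char_p] by simp
  then show ?thesis
    using center_carrier[OF a] by (simp add: pow_fst pow_snd dual_ring_simps)
qed

end

section \<open>The group G_p(A_*)\<close>

lemma coeff_deg_0 [simp]: "coeff_deg p 0 = 0"
  by (simp add: coeff_deg_def)

lemma coeff_deg_parity: "p = 2 \<or> even (coeff_deg p i)"
  by (simp add: coeff_deg_def)

lemma coeff_deg_comp: "j \<le> i \<Longrightarrow> int (p ^ j) * coeff_deg p (i - j) + coeff_deg p j = coeff_deg p i"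
proof -
  assume "j \<le> i"
  then have e: "(x::int) ^ j * x ^ (i - j) = x ^ i" for x
    by (simp flip: power_add)
  show ?thesis
    unfolding coeff_deg_def by (simp add: right_diff_distrib e)
qed

locale graded_Fp_algebra = ring R for R :: "('a, 'b) ring_scheme" (structure) +
  fixes p :: nat and A :: "int \<Rightarrow> 'a set"
  assumes prime_p: "Factorial_Ring.prime p"
    and graded: "graded_comm_algebra p R A"
begin

lemma graded_comm_algebraD:
  "\<forall>n. additive_subgroup (A n) R"
  "\<forall>x\<in>carrier R. \<exists>I f. finite I \<and> (\<forall>n\<in>I. f n \<in> A n) \<and> x = (\<Oplus>n\<in>I. f n)"
  "\<one> \<in> A 0"
  "\<forall>m n a b. a \<in> A m \<and> b \<in> A n \<longrightarrow> a \<otimes> b \<in> A (m + n)"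
  "\<forall>m n a b. a \<in> A m \<and> b \<in> A n \<longrightarrow> a \<otimes> b = (if even (m * n) then b \<otimes> a else \<ominus> (b \<otimes> a))"
  "add_pow R p \<one> = \<zero>"
  by (insert graded[unfolded graded_comm_algebra_def]) (elim conjE, assumption)+

lemma homogeneous_subgroup: "additive_subgroup (A n) R"
  using graded_comm_algebraD(1) by blast

lemma homogeneous_decomposition:
  "x \<in> carrier R \<Longrightarrow> \<exists>I f. finite I \<and> (\<forall>n\<in>I. f n \<in> A n) \<and> x = (\<Oplus>n\<in>I. f n)"
  using graded_comm_algebraD(2) by blast

lemma mult_homogeneous: "a \<in> A m \<Longrightarrow> b \<in> A n \<Longrightarrow> a \<otimes> b \<in> A (m + n)"
  using graded_comm_algebraD(4) by blast

lemma graded_commute: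
  "a \<in> A m \<Longrightarrow> b \<in> A n \<Longrightarrow> a \<otimes> b = (if even (m * n) then b \<otimes> a else \<ominus> (b \<otimes> a))"
  using graded_comm_algebraD(5) by blast

lemmas one_homogeneous = graded_comm_algebraD(3)
  and char_p = graded_comm_algebraD(6)

lemma homogeneous_carrier: "x \<in> A n \<Longrightarrow> x \<in> carrier R"
  using additive_subgroup.a_subset[OF homogeneous_subgroup] by blast

lemma homogeneous_zero [simp]: "\<zero> \<in> A n"
  using additive_subgroup.zero_closed[OF homogeneous_subgroup] .

lemma homogeneous_add: "x \<in> A n \<Longrightarrow> y \<in> A n \<Longrightarrow> x \<oplus> y \<in> A n"
  using additive_subgroup.a_closed[OF homogeneous_subgroup] .

lemma homogeneous_neg: "x \<in> A n \<Longrightarrow> \<ominus> x \<in> A n"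
  using additive_subgroup.a_inv_closed[OF homogeneous_subgroup] .

lemma char_2_neg:
  assumes "p = 2" and x: "x \<in> carrier R"
  shows "\<ominus> x = x"
proof -
  have "\<one> \<oplus> \<one> = \<zero>"
    using char_p \<open>p = 2\<close> by (simp add: numeral_2_eq_2)
  then have "x \<oplus> x = \<zero>"
    using x l_distr[of \<one> \<one> x] by simp
  then show ?thesis
    using x by (metis minus_equality)
qed

lemma homogeneous_central:
  assumes a: "a \<in> A m" and parity: "p = 2 \<or> even m"
  shows "a \<in> ring_center R"
proof -
  have commute_homogeneous: "a \<otimes> b = b \<otimes> a" if b: "b \<in> A n" for b n
  proof (cases "even (m * n)")
    case True
    then show ?thesis using graded_commute[OF a b] by simp
  next
    case False
    then have "p = 2"
      using parity by auto
    then show ?thesis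
      using graded_commute[OF a b] False char_2_neg[of "b \<otimes> a"] a b homogeneous_carrier by simp
  qed
  have "a \<otimes> y = y \<otimes> a" if y: "y \<in> carrier R" for y
  proof -
    obtain I f where I: "finite I" "\<forall>n\<in>I. f n \<in> A n" and y_eq: "y = (\<Oplus>n\<in>I. f n)"
      using homogeneous_decomposition[OF y] by blast
    have f: "f \<in> I \<rightarrow> carrier R"
      using I homogeneous_carrier by blast
    have "a \<otimes> y = (\<Oplus>n\<in>I. a \<otimes> f n)"
      using I f a by (simp add: y_eq finsum_rdistr homogeneous_carrier)
    also have "\<dots> = (\<Oplus>n\<in>I. f n \<otimes> a)"
      using I f a by (intro finsum_cong) (auto simp: simp_implies_def homogeneous_carrier
          intro!: commute_homogeneous)
    also have "\<dots> = y \<otimes> a"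
      using I f a by (simp add: y_eq finsum_ldistr homogeneous_carrier)
    finally show ?thesis .
  qed
  then show ?thesis
    using a by (simp add: ring_center_def homogeneous_carrier)
qed

abbreviation D :: "('a \<times> 'a) ring" where
  "D \<equiv> dual_ring R"

sublocale D: cring_char_p D p
  by (rule dual_ring_char_p[OF prime_p char_p])

text \<open>\<open>homogeneous_pair n (a, b)\<close>: \<open>a + \<epsilon>b\<close> is homogeneous of degree \<open>n\<close>, where \<open>\<epsilon>\<close> has degree
  \<open>-1\<close> and vanishes for \<open>p = 2\<close>.\<close>

definition homogeneous_pair :: "int \<Rightarrow> 'a \<times> 'a \<Rightarrow> bool" where
  "homogeneous_pair n x \<longleftrightarrow> fst x \<in> A n \<and> snd x \<in> (if p = 2 then {\<zero>} else A (n + 1))"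

lemma Gp_carrier_iff:
  "\<alpha> \<in> Gp_carrier p R A \<longleftrightarrow> (\<forall>i. homogeneous_pair (coeff_deg p i) (\<alpha> i)) \<and> fst (\<alpha> 0) = \<one>"
  unfolding Gp_carrier_def homogeneous_pair_def by auto

lemma homogeneous_pair_carrier:
  "homogeneous_pair n x \<Longrightarrow> p = 2 \<or> even n \<Longrightarrow> x \<in> carrier D"
  by (auto simp: homogeneous_pair_def dual_ring_carrier_iff homogeneous_central homogeneous_carrier
      split: if_splits)

lemma homogeneous_pair_one: "homogeneous_pair 0 \<one>\<^bsub>D\<^esub>"
  by (simp add: homogeneous_pair_def dual_ring_simps one_homogeneous)

lemma homogeneous_pair_zero: "homogeneous_pair n \<zero>\<^bsub>D\<^esub>"
  by (simp add: homogeneous_pair_def dual_ring_simps)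

lemma homogeneous_pair_add:
  "homogeneous_pair n x \<Longrightarrow> homogeneous_pair n y \<Longrightarrow> homogeneous_pair n (x \<oplus>\<^bsub>D\<^esub> y)"
  by (auto simp: homogeneous_pair_def dual_ring_simps homogeneous_add split: if_splits)

lemma homogeneous_pair_neg:
  "x \<in> carrier D \<Longrightarrow> homogeneous_pair n x \<Longrightarrow> homogeneous_pair n (\<ominus>\<^bsub>D\<^esub> x)"
  by (auto simp: homogeneous_pair_def dual_ring_neg homogeneous_neg split: if_splits)

lemma homogeneous_pair_mult:
  assumes x: "homogeneous_pair m x" and y: "homogeneous_pair n y"
  shows "homogeneous_pair (m + n) (x \<otimes>\<^bsub>D\<^esub> y)"
proof (cases "p = 2")
  case True
  then show ?thesis
    using x y unfolding homogeneous_pair_def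
    by (auto simp: dual_ring_simps eps_mult_def mult_homogeneous homogeneous_carrier)
next
  case False
  have "fst x \<otimes> snd y \<in> A (m + n + 1)"
    using mult_homogeneous[of "fst x" m "snd y" "n + 1"] x y False
    by (simp add: homogeneous_pair_def add.assoc)
  moreover have "snd x \<otimes> fst y \<in> A (m + n + 1)"
    using mult_homogeneous[of "snd x" "m + 1" "fst y" n] x y False
    by (simp add: homogeneous_pair_def add_ac)
  ultimately show ?thesis
    using x y False
    by (simp add: homogeneous_pair_def dual_ring_simps eps_mult_def mult_homogeneous
        homogeneous_add)
qed

lemma homogeneous_pair_pow:
  assumes x: "homogeneous_pair n x"
  shows "homogeneous_pair (int k * n) (x [^]\<^bsub>D\<^esub> k)"
proof (induction k)
  case 0
  then show ?case by (simp add: homogeneous_pair_one)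
next
  case (Suc k)
  then have "homogeneous_pair (int k * n + n) (x [^]\<^bsub>D\<^esub> k \<otimes>\<^bsub>D\<^esub> x)"
    using x by (rule homogeneous_pair_mult)
  then show ?case
    by (simp add: algebra_simps)
qed

lemma homogeneous_pair_finsum:
  assumes "finite I" "p = 2 \<or> even n" "\<And>i. i \<in> I \<Longrightarrow> homogeneous_pair n (f i)"
  shows "homogeneous_pair n (finsum D f I)"
  using assms
proof (induction I rule: finite_induct)
  case empty
  then show ?case by (simp add: homogeneous_pair_zero)
next
  case (insert i I)
  have "f \<in> insert i I \<rightarrow> carrier D"
    using insert.prems homogeneous_pair_carrier by blast
  then have "finsum D f (insert i I) = f i \<oplus>\<^bsub>D\<^esub> finsum D f I"
    using insert.hyps by (simp add: D.finsum_insert)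
  then show ?case
    using insert by (simp add: homogeneous_pair_add)
qed

lemma homogeneous_pair_frob_mult:
  assumes "homogeneous_pair (coeff_deg p k) x" "homogeneous_pair (coeff_deg p j) y"
  shows "homogeneous_pair (coeff_deg p (k + j)) (D.frob j x \<otimes>\<^bsub>D\<^esub> y)"
  using homogeneous_pair_mult[OF homogeneous_pair_pow[OF assms(1), of "p ^ j"] assms(2)]
    coeff_deg_comp[of j "k + j" p]
  by (simp add: D.frob_def)

abbreviation G :: "(nat \<Rightarrow> 'a \<times> 'a) monoid" where
  "G \<equiv> Gp p R A"

lemma Gp_carrier_seq: "\<alpha> \<in> Gp_carrier p R A \<Longrightarrow> \<alpha> \<in> UNIV \<rightarrow> carrier D"
  unfolding Gp_carrier_iff Pi_iff using homogeneous_pair_carrier[OF _ coeff_deg_parity] by blast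

lemma Gp_carrier_0:
  assumes "\<alpha> \<in> Gp_carrier p R A"
  shows "\<alpha> 0 = (\<one>, snd (\<alpha> 0))" and "snd (\<alpha> 0) \<in> carrier R"
  using assms Gp_carrier_seq[OF assms]
  by (auto simp: Gp_carrier_iff dual_ring_carrier_iff prod_eq_iff)

lemma Gp_carrier_unit: "\<alpha> \<in> Gp_carrier p R A \<Longrightarrow> \<alpha> 0 \<in> Units D"
  using Gp_carrier_0 dual_ring_unit(1) by metis

lemma Gp_mult_eq:
  assumes "a \<in> UNIV \<rightarrow> carrier D" "b \<in> UNIV \<rightarrow> carrier D"
  shows "Gp_mult p R a b = D.comp_mult a b"
proof
  fix i
  have "D.comp_mult a b i
      = (\<Oplus>j\<in>{..i}. fst (D.frob j (a (i - j)) \<otimes>\<^bsub>D\<^esub> b j), \<Oplus>j\<in>{..i}. snd (D.frob j (a (i - j)) \<otimes>\<^bsub>D\<^esub> b j))"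
    unfolding D.comp_mult_def by (rule dual_ring_finsum) (use assms in \<open>auto simp: Pi_iff\<close>)
  then show "Gp_mult p R a b i = D.comp_mult a b i"
    using assms by (simp add: Gp_mult_def D.frob_def eps_pow_dual_ring dual_ring_simps Pi_iff)
qed

lemma comp_mult_Gp_carrier:
  assumes a: "a \<in> Gp_carrier p R A" and b: "b \<in> Gp_carrier p R A"
  shows "D.comp_mult a b \<in> Gp_carrier p R A"
proof -
  have summand: "homogeneous_pair (coeff_deg p i) (D.frob j (a (i - j)) \<otimes>\<^bsub>D\<^esub> b j)" if "j \<le> i" for i j
    using homogeneous_pair_frob_mult[of "i - j" "a (i - j)" j "b j"] a b that
    by (simp add: Gp_carrier_iff)
  have "homogeneous_pair (coeff_deg p i) (D.comp_mult a b i)" for i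
    unfolding D.comp_mult_def using coeff_deg_parity summand by (intro homogeneous_pair_finsum) auto
  moreover have "fst (D.comp_mult a b 0) = \<one>"
    using a b Gp_carrier_seq[OF a] Gp_carrier_seq[OF b]
    by (simp add: D.comp_mult_0 dual_ring_simps eps_mult_def Gp_carrier_iff)
  ultimately show ?thesis
    by (simp add: Gp_carrier_iff)
qed

lemma Gp_carrier_inv_0:
  assumes "a \<in> Gp_carrier p R A"
  shows "inv\<^bsub>D\<^esub> (a 0) = (\<one>, \<ominus> snd (a 0))" and "homogeneous_pair 0 (inv\<^bsub>D\<^esub> (a 0))"
proof -
  show inv0: "inv\<^bsub>D\<^esub> (a 0) = (\<one>, \<ominus> snd (a 0))"
    using dual_ring_unit(2) Gp_carrier_0[OF assms] by metis
  have "homogeneous_pair 0 (a 0)"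
    using assms unfolding Gp_carrier_iff by (metis coeff_deg_0)
  then show "homogeneous_pair 0 (inv\<^bsub>D\<^esub> (a 0))"
    unfolding inv0 homogeneous_pair_def
    by (auto simp: one_homogeneous homogeneous_neg split: if_splits)
qed

lemma comp_inv_Gp_carrier:
  assumes a: "a \<in> Gp_carrier p R A"
  shows "D.comp_inv a \<in> Gp_carrier p R A"
proof -
  have seq: "a \<in> UNIV \<rightarrow> carrier D" and unit: "a 0 \<in> Units D"
    using Gp_carrier_seq[OF a] Gp_carrier_unit[OF a] .
  note hom_inv0 = Gp_carrier_inv_0(2)[OF a]
  have "homogeneous_pair (coeff_deg p i) (D.comp_inv a i)" for i
  proof (induction i rule: less_induct)
    case (less i)
    show ?case
    proof (cases "i = 0")
      case True
      then show ?thesis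
        using hom_inv0 by (simp add: D.comp_inv_0)
    next
      case False
      define S where "S = finsum D (\<lambda>j. D.frob j (D.comp_inv a (i - j)) \<otimes>\<^bsub>D\<^esub> a j) {1..i}"
      have S: "S \<in> carrier D"
        unfolding S_def using D.comp_inv_closed[OF seq unit] seq
        by (auto intro!: D.finsum_closed simp: Pi_iff)
      have "homogeneous_pair (coeff_deg p (i - j + j)) (D.frob j (D.comp_inv a (i - j)) \<otimes>\<^bsub>D\<^esub> a j)"
        if "j \<in> {1..i}" for j
        using that less a by (intro homogeneous_pair_frob_mult) (auto simp: Gp_carrier_iff)
      then have "homogeneous_pair (coeff_deg p i) S"
        unfolding S_def using coeff_deg_parity by (intro homogeneous_pair_finsum) auto
      then have "homogeneous_pair (coeff_deg p i + 0) (\<ominus>\<^bsub>D\<^esub> S \<otimes>\<^bsub>D\<^esub> inv\<^bsub>D\<^esub> (a 0))"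
        using S hom_inv0 by (intro homogeneous_pair_mult homogeneous_pair_neg)
      then show ?thesis
        using D.comp_inv_Suc[OF seq unit] False by (simp add: S_def)
    qed
  qed
  moreover have "fst (D.comp_inv a 0) = \<one>"
    by (simp add: D.comp_inv_0 Gp_carrier_inv_0(1)[OF a])
  ultimately show ?thesis
    by (simp add: Gp_carrier_iff)
qed

lemma carrier_Gp: "carrier G = Gp_carrier p R A"
  by (simp add: Gp_def)

lemma one_Gp: "\<one>\<^bsub>G\<^esub> = D.comp_unit"
  by (auto simp: Gp_def D.comp_unit_def dual_ring_simps)

lemma mult_Gp: "x \<in> carrier G \<Longrightarrow> y \<in> carrier G \<Longrightarrow> x \<otimes>\<^bsub>G\<^esub> y = D.comp_mult x y"
  by (simp add: Gp_def Gp_mult_eq Gp_carrier_seq)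

lemma comp_unit_Gp_carrier: "D.comp_unit \<in> Gp_carrier p R A"
  using homogeneous_pair_one homogeneous_pair_zero
  by (auto simp: Gp_carrier_iff D.comp_unit_def dual_ring_simps)

lemma Gp_group: "group G"
proof (rule groupI)
  show "\<one>\<^bsub>G\<^esub> \<in> carrier G"
    by (simp add: one_Gp carrier_Gp comp_unit_Gp_carrier)
next
  fix x y z
  assume x: "x \<in> carrier G" and y: "y \<in> carrier G" and z: "z \<in> carrier G"
  show "x \<otimes>\<^bsub>G\<^esub> y \<in> carrier G"
    using x y by (simp add: mult_Gp carrier_Gp comp_mult_Gp_carrier)
  show "x \<otimes>\<^bsub>G\<^esub> y \<otimes>\<^bsub>G\<^esub> z = x \<otimes>\<^bsub>G\<^esub> (y \<otimes>\<^bsub>G\<^esub> z)"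
    using x y z
    by (simp add: mult_Gp carrier_Gp comp_mult_Gp_carrier D.comp_mult_assoc Gp_carrier_seq)
next
  fix x
  assume x: "x \<in> carrier G"
  show "\<one>\<^bsub>G\<^esub> \<otimes>\<^bsub>G\<^esub> x = x"
    using x comp_unit_Gp_carrier
    by (simp add: one_Gp mult_Gp carrier_Gp Gp_carrier_seq D.comp_unit_mult)
  show "\<exists>y\<in>carrier G. y \<otimes>\<^bsub>G\<^esub> x = \<one>\<^bsub>G\<^esub>"
    using x comp_inv_Gp_carrier Gp_carrier_seq Gp_carrier_unit
    by (intro bexI[of _ "D.comp_inv x"]) (simp_all add: mult_Gp carrier_Gp one_Gp D.comp_inv_mult)
qed

lemma Gp_components:
  assumes "x \<in> carrier G"
  shows "x i \<in> carrier D" and "fst (x i) \<in> carrier R" and "snd (x i) \<in> carrier R"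
    and "fst (x 0) = \<one>"
proof -
  show xi: "x i \<in> carrier D"
    using assms Gp_carrier_seq[of x] by (auto simp: carrier_Gp)
  then show "fst (x i) \<in> carrier R" "snd (x i) \<in> carrier R"
    by (auto simp: dual_ring_carrier_iff center_carrier)
  show "fst (x 0) = \<one>"
    using assms by (simp add: carrier_Gp Gp_carrier_iff)
qed

lemma frob_Gp_coeff_0:
  assumes x: "x \<in> carrier G" and "0 < j"
  shows "D.frob j (x 0) = \<one>\<^bsub>D\<^esub>"
proof -
  obtain l where j: "j = Suc l"
    using \<open>0 < j\<close> by (cases j) auto
  have "x 0 [^]\<^bsub>D\<^esub> p = \<one>\<^bsub>D\<^esub>"
    using Gp_components[OF x] by (simp add: dual_ring_pow_char[OF prime_p char_p] dual_ring_simps)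
  then show ?thesis
    using Gp_components[OF x] by (simp add: j D.frob_Suc)
qed

lemma frob_fst_zero:
  assumes z: "z \<in> carrier D" "fst z = \<zero>" and "0 < j"
  shows "D.frob j z = \<zero>\<^bsub>D\<^esub>"
proof -
  obtain l where j: "j = Suc l"
    using \<open>0 < j\<close> by (cases j) auto
  have "z [^]\<^bsub>D\<^esub> p = \<zero>\<^bsub>D\<^esub>"
    using z prime_gt_0_nat[OF prime_p]
    by (simp add: dual_ring_pow_char[OF prime_p char_p] dual_ring_simps nat_pow_zero)
  then show ?thesis
    using z by (simp add: j D.frob_Suc)
qed

lemma dual_mult_Gp_coeff_0:
  assumes z: "z \<in> carrier D" and x: "x \<in> carrier G"
  shows "fst (z \<otimes>\<^bsub>D\<^esub> x 0) = fst z" and "fst z = \<zero> \<Longrightarrow> z \<otimes>\<^bsub>D\<^esub> x 0 = z"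
  using z Gp_components[OF x]
  by (auto simp: dual_ring_simps eps_mult_def dual_ring_carrier_iff center_carrier prod_eq_iff)

subsection \<open>Filtration and commutators\<close>

lemma Gp_filt_iff: "u \<in> Gp_filt p R A N \<longleftrightarrow> u \<in> carrier G \<and> (\<forall>i\<le>N. u i = D.comp_unit i)"
  by (auto simp: Gp_filt_def carrier_Gp D.comp_unit_def dual_ring_simps)

lemma Gp_filt_half_iff:
  "u \<in> Gp_filt_half p R A N \<longleftrightarrow> u \<in> Gp_filt p R A N \<and> fst (u (Suc N)) = \<zero>"
  by (simp add: Gp_filt_half_def)

lemma Gp_filt_iff_mult:
  assumes u: "u \<in> carrier G" and y: "y \<in> carrier G"
  shows "u \<in> Gp_filt p R A N \<longleftrightarrow> (\<forall>i\<le>N. (u \<otimes>\<^bsub>G\<^esub> y) i = y i)"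
proof -
  have u': "u \<in> UNIV \<rightarrow> carrier D" and y': "y \<in> UNIV \<rightarrow> carrier D" "y 0 \<in> Units D"
    using u y by (simp_all add: carrier_Gp Gp_carrier_seq Gp_carrier_unit)
  show ?thesis
    using D.comp_mult_trunc[OF u' _ y'(1)] D.comp_mult_trunc_cancel[OF u' y'] u
    by (auto simp: Gp_filt_iff mult_Gp[OF u y])
qed

lemma Gp_filt_mult_next:
  assumes u: "u \<in> Gp_filt p R A N" and y: "y \<in> carrier G"
  shows "fst ((u \<otimes>\<^bsub>G\<^esub> y) (Suc N)) = fst (u (Suc N)) \<oplus> fst (y (Suc N))"
proof -
  have uG: "u \<in> carrier G"
    using u by (simp add: Gp_filt_iff)
  then have "(u \<otimes>\<^bsub>G\<^esub> y) (Suc N) = u (Suc N) \<otimes>\<^bsub>D\<^esub> y 0 \<oplus>\<^bsub>D\<^esub> y (Suc N)"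
    using u y D.comp_mult_trunc_next[of u N y]
    by (simp add: mult_Gp Gp_filt_iff carrier_Gp Gp_carrier_seq)
  then show ?thesis
    using dual_mult_Gp_coeff_0(1)[OF Gp_components(1)[OF uG] y] by (simp add: dual_ring_simps(5))
qed

lemma Gp_filt_half_iff_mult:
  assumes u: "u \<in> carrier G" and y: "y \<in> carrier G"
  shows "u \<in> Gp_filt_half p R A N
    \<longleftrightarrow> (\<forall>i\<le>N. (u \<otimes>\<^bsub>G\<^esub> y) i = y i) \<and> fst ((u \<otimes>\<^bsub>G\<^esub> y) (Suc N)) = fst (y (Suc N))"
proof -
  have "fst (u (Suc N)) \<oplus> fst (y (Suc N)) = fst (y (Suc N)) \<longleftrightarrow> fst (u (Suc N)) = \<zero>"
    using Gp_components[OF u] Gp_components[OF y] by (metis add.r_cancel_one l_zero)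
  then show ?thesis
    using Gp_filt_iff_mult[OF u y] Gp_filt_mult_next[OF _ y] by (auto simp: Gp_filt_half_iff)
qed

lemma subgroup_Gp_filt: "subgroup (Gp_filt p R A N) G"
proof -
  interpret group G by (rule Gp_group)
  show ?thesis
  proof (rule subgroupI)
    show "Gp_filt p R A N \<subseteq> carrier G"
      by (auto simp: Gp_filt_iff)
    show "Gp_filt p R A N \<noteq> {}"
      using one_closed by (auto simp: Gp_filt_iff one_Gp)
  next
    fix a
    assume a: "a \<in> Gp_filt p R A N"
    then have aG: "a \<in> carrier G"
      by (simp add: Gp_filt_iff)
    show "inv\<^bsub>G\<^esub> a \<in> Gp_filt p R A N"
      using Gp_filt_iff_mult[OF inv_closed[OF aG] aG] a by (simp add: aG one_Gp Gp_filt_iff)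
    fix b
    assume b: "b \<in> Gp_filt p R A N"
    then show "a \<otimes>\<^bsub>G\<^esub> b \<in> Gp_filt p R A N"
      using Gp_filt_iff_mult[OF aG, of b] a m_closed[OF aG, of b] by (auto simp: Gp_filt_iff)
  qed
qed

lemma subgroup_Gp_filt_half: "subgroup (Gp_filt_half p R A N) G"
proof -
  interpret group G by (rule Gp_group)
  show ?thesis
  proof (rule subgroupI)
    show "Gp_filt_half p R A N \<subseteq> carrier G"
      by (auto simp: Gp_filt_half_iff Gp_filt_iff)
    have "\<one>\<^bsub>G\<^esub> \<in> Gp_filt_half p R A N"
      using one_closed
      by (simp add: Gp_filt_half_iff Gp_filt_iff one_Gp D.comp_unit_def dual_ring_simps)
    then show "Gp_filt_half p R A N \<noteq> {}"
      by blast
  next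
    fix a
    assume a: "a \<in> Gp_filt_half p R A N"
    then have aG: "a \<in> carrier G"
      by (simp add: Gp_filt_half_iff Gp_filt_iff)
    show "inv\<^bsub>G\<^esub> a \<in> Gp_filt_half p R A N"
      using Gp_filt_half_iff_mult[OF inv_closed[OF aG] aG] a
      by (simp add: aG one_Gp Gp_filt_half_iff Gp_filt_iff D.comp_unit_def dual_ring_simps)
    fix b
    assume b: "b \<in> Gp_filt_half p R A N"
    then show "a \<otimes>\<^bsub>G\<^esub> b \<in> Gp_filt_half p R A N"
      using Gp_filt_half_iff_mult[OF aG, of b] a m_closed[OF aG, of b]
      by (auto simp: Gp_filt_half_iff Gp_filt_iff)
  qed
qed

lemma commutator_Gp_filt:
  assumes x: "x \<in> carrier G" and y: "y \<in> carrier G"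
    and eq: "\<forall>i\<le>N. (x \<otimes>\<^bsub>G\<^esub> y) i = (y \<otimes>\<^bsub>G\<^esub> x) i"
  shows "x \<otimes>\<^bsub>G\<^esub> y \<otimes>\<^bsub>G\<^esub> inv\<^bsub>G\<^esub> x \<otimes>\<^bsub>G\<^esub> inv\<^bsub>G\<^esub> y \<in> Gp_filt p R A N"
proof -
  interpret group G by (rule Gp_group)
  show ?thesis
    using Gp_filt_iff_mult[of "x \<otimes>\<^bsub>G\<^esub> y \<otimes>\<^bsub>G\<^esub> inv\<^bsub>G\<^esub> x \<otimes>\<^bsub>G\<^esub> inv\<^bsub>G\<^esub> y" "y \<otimes>\<^bsub>G\<^esub> x" N]
      commutator_mult_swap[OF x y] eq x y
    by simp
qed

lemma commutator_Gp_filt_half: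
  assumes x: "x \<in> carrier G" and y: "y \<in> carrier G"
    and eq: "\<forall>i\<le>N. (x \<otimes>\<^bsub>G\<^esub> y) i = (y \<otimes>\<^bsub>G\<^esub> x) i"
    and eq_next: "fst ((x \<otimes>\<^bsub>G\<^esub> y) (Suc N)) = fst ((y \<otimes>\<^bsub>G\<^esub> x) (Suc N))"
  shows "x \<otimes>\<^bsub>G\<^esub> y \<otimes>\<^bsub>G\<^esub> inv\<^bsub>G\<^esub> x \<otimes>\<^bsub>G\<^esub> inv\<^bsub>G\<^esub> y \<in> Gp_filt_half p R A N"
proof -
  interpret group G by (rule Gp_group)
  show ?thesis
    using Gp_filt_half_iff_mult[of "x \<otimes>\<^bsub>G\<^esub> y \<otimes>\<^bsub>G\<^esub> inv\<^bsub>G\<^esub> x \<otimes>\<^bsub>G\<^esub> inv\<^bsub>G\<^esub> y" "y \<otimes>\<^bsub>G\<^esub> x" N]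
      commutator_mult_swap[OF x y] eq eq_next x y
    by simp
qed

lemma Gp_mult_commute_low:
  assumes x: "x \<in> carrier G" and y: "y \<in> carrier G"
  shows "(x \<otimes>\<^bsub>G\<^esub> y) 0 = (y \<otimes>\<^bsub>G\<^esub> x) 0"
    and "fst ((x \<otimes>\<^bsub>G\<^esub> y) 1) = fst ((y \<otimes>\<^bsub>G\<^esub> x) 1)"
proof -
  have seq: "x \<in> UNIV \<rightarrow> carrier D" "y \<in> UNIV \<rightarrow> carrier D"
    using x y by (simp_all add: carrier_Gp Gp_carrier_seq)
  show "(x \<otimes>\<^bsub>G\<^esub> y) 0 = (y \<otimes>\<^bsub>G\<^esub> x) 0"
    using x y seq Gp_components by (simp add: mult_Gp D.comp_mult_0 D.m_comm)
  have fst_1: "fst ((a \<otimes>\<^bsub>G\<^esub> b) 1) = fst (a 1) \<oplus> fst (b 1)"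
    if a: "a \<in> carrier G" and b: "b \<in> carrier G" for a b
  proof -
    have "(a \<otimes>\<^bsub>G\<^esub> b) 1
        = D.frob 0 (a (1 - 0)) \<otimes>\<^bsub>D\<^esub> b 0 \<oplus>\<^bsub>D\<^esub> D.frob 1 (a (1 - 1)) \<otimes>\<^bsub>D\<^esub> b 1"
      unfolding mult_Gp[OF a b] D.comp_mult_def
      by (rule D.finsum_eq_pair) (auto simp: Gp_components[OF a] Gp_components[OF b])
    then show ?thesis
      using dual_mult_Gp_coeff_0(1)[OF Gp_components(1)[OF a] b] Gp_components[OF a] Gp_components[OF b]
      by (simp add: frob_Gp_coeff_0[OF a] dual_ring_simps(5))
  qed
  show "fst ((x \<otimes>\<^bsub>G\<^esub> y) 1) = fst ((y \<otimes>\<^bsub>G\<^esub> x) 1)"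
    using fst_1[OF x y] fst_1[OF y x] Gp_components[OF x] Gp_components[OF y] by (simp add: a_comm)
qed

lemma Gp_mult_commute_half:
  assumes x: "x \<in> Gp_filt_half p R A k" and y: "y \<in> carrier G"
  shows "\<forall>i\<le>Suc k. (x \<otimes>\<^bsub>G\<^esub> y) i = (y \<otimes>\<^bsub>G\<^esub> x) i"
proof -
  have xG: "x \<in> carrier G" and low: "\<forall>i\<le>k. x i = D.comp_unit i" and eps: "fst (x (Suc k)) = \<zero>"
    using x by (simp_all add: Gp_filt_half_iff Gp_filt_iff)
  have seq: "x \<in> UNIV \<rightarrow> carrier D" "y \<in> UNIV \<rightarrow> carrier D"
    using xG y by (simp_all add: carrier_Gp Gp_carrier_seq)
  have "(x \<otimes>\<^bsub>G\<^esub> y) (Suc k) = x (Suc k) \<oplus>\<^bsub>D\<^esub> y (Suc k)"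
    using D.comp_mult_trunc_next[OF seq(1) low seq(2)]
      dual_mult_Gp_coeff_0(2)[OF Gp_components(1)[OF xG] y eps]
    by (simp add: mult_Gp[OF xG y])
  moreover have "(y \<otimes>\<^bsub>G\<^esub> x) (Suc k) = y (Suc k) \<oplus>\<^bsub>D\<^esub> x (Suc k)"
    using D.comp_mult_trunc_right_next[OF seq(1) low seq(2)] frob_Gp_coeff_0[OF y]
    by (simp add: mult_Gp[OF y xG] Gp_components[OF xG])
  moreover have "(x \<otimes>\<^bsub>G\<^esub> y) i = (y \<otimes>\<^bsub>G\<^esub> x) i" if "i \<le> k" for i
    using D.comp_mult_trunc[OF seq(1) low seq(2) that]
      D.comp_mult_trunc_right[OF seq(1) low seq(2) that]
    by (simp add: mult_Gp[OF xG y] mult_Gp[OF y xG])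
  ultimately show ?thesis
    using Gp_components[OF xG] Gp_components[OF y] by (auto simp: le_Suc_eq D.a_comm)
qed

lemma Gp_mult_half_fst_left:
  assumes x: "x \<in> Gp_filt_half p R A k" and y: "y \<in> carrier G"
  shows "fst ((x \<otimes>\<^bsub>G\<^esub> y) (Suc (Suc k))) = fst (x (Suc (Suc k))) \<oplus> fst (y (Suc (Suc k)))"
proof -
  have xG: "x \<in> carrier G" and low: "\<forall>i\<le>k. x i = D.comp_unit i" and eps: "fst (x (Suc k)) = \<zero>"
    using x by (simp_all add: Gp_filt_half_iff Gp_filt_iff)
  note [simp] = Gp_components[OF xG] Gp_components[OF y]
  have "(x \<otimes>\<^bsub>G\<^esub> y) (Suc (Suc k))
      = D.frob 0 (x (Suc (Suc k) - 0)) \<otimes>\<^bsub>D\<^esub> y 0 \<oplus>\<^bsub>D\<^esub>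
        (D.frob 1 (x (Suc (Suc k) - 1)) \<otimes>\<^bsub>D\<^esub> y 1 \<oplus>\<^bsub>D\<^esub>
         D.frob (Suc (Suc k)) (x (Suc (Suc k) - Suc (Suc k))) \<otimes>\<^bsub>D\<^esub> y (Suc (Suc k)))"
    unfolding mult_Gp[OF xG y] D.comp_mult_def
    by (rule D.finsum_eq_triple) (use low in \<open>auto simp: D.comp_unit_def\<close>)
  also have "D.frob 1 (x (Suc (Suc k) - 1)) \<otimes>\<^bsub>D\<^esub> y 1 = \<zero>\<^bsub>D\<^esub>"
    using frob_fst_zero[OF _ eps] by simp
  finally show ?thesis
    using dual_mult_Gp_coeff_0(1)[of "x (Suc (Suc k))" y] y
    by (simp add: frob_Gp_coeff_0[OF xG] dual_ring_simps(4,5))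
qed

lemma Gp_mult_half_fst_right:
  assumes x: "x \<in> Gp_filt_half p R A k" and y: "y \<in> carrier G"
  shows "fst ((y \<otimes>\<^bsub>G\<^esub> x) (Suc (Suc k))) = fst (y (Suc (Suc k))) \<oplus> fst (x (Suc (Suc k)))"
proof -
  have xG: "x \<in> carrier G" and low: "\<forall>i\<le>k. x i = D.comp_unit i" and eps: "fst (x (Suc k)) = \<zero>"
    using x by (simp_all add: Gp_filt_half_iff Gp_filt_iff)
  note [simp] = Gp_components[OF xG] Gp_components[OF y]
  have "(y \<otimes>\<^bsub>G\<^esub> x) (Suc (Suc k))
      = D.frob 0 (y (Suc (Suc k) - 0)) \<otimes>\<^bsub>D\<^esub> x 0 \<oplus>\<^bsub>D\<^esub>
        (D.frob (Suc k) (y (Suc (Suc k) - Suc k)) \<otimes>\<^bsub>D\<^esub> x (Suc k) \<oplus>\<^bsub>D\<^esub>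
         D.frob (Suc (Suc k)) (y (Suc (Suc k) - Suc (Suc k))) \<otimes>\<^bsub>D\<^esub> x (Suc (Suc k)))"
    unfolding mult_Gp[OF y xG] D.comp_mult_def
    by (rule D.finsum_eq_triple) (use low in \<open>auto simp: D.comp_unit_def\<close>)
  moreover have "fst (D.frob (Suc k) (y 1) \<otimes>\<^bsub>D\<^esub> x (Suc k)) = \<zero>"
    using D.frob_closed[OF Gp_components(1)[OF y], of "Suc k" 1] eps
    by (simp add: dual_ring_carrier_iff center_carrier dual_ring_simps(2) eps_mult_def)
  ultimately show ?thesis
    using dual_mult_Gp_coeff_0(1)[of "y (Suc (Suc k))" x] xG low
    by (simp add: frob_Gp_coeff_0[OF y] dual_ring_simps(5))
qed

lemma Gp_mult_commute_half_next:
  assumes x: "x \<in> Gp_filt_half p R A k" and y: "y \<in> carrier G"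
  shows "fst ((x \<otimes>\<^bsub>G\<^esub> y) (Suc (Suc k))) = fst ((y \<otimes>\<^bsub>G\<^esub> x) (Suc (Suc k)))"
  using Gp_mult_half_fst_left[OF x y] Gp_mult_half_fst_right[OF x y] Gp_components[OF y]
    x Gp_components[of x] by (simp add: Gp_filt_half_iff Gp_filt_iff a_comm)

lemma Gp_mult_half_eq_add:
  assumes x: "x \<in> Gp_filt_half p R A m" and y: "y \<in> Gp_filt_half p R A m"
    and i: "0 < i" "i \<le> 2 * m + 2"
  shows "(x \<otimes>\<^bsub>G\<^esub> y) i = x i \<oplus>\<^bsub>D\<^esub> y i"
proof -
  have xG: "x \<in> carrier G" and x_low: "\<forall>i\<le>m. x i = D.comp_unit i"
    and x_eps: "fst (x (Suc m)) = \<zero>" and yG: "y \<in> carrier G" and y_low: "\<forall>i\<le>m. y i = D.comp_unit i"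
    using x y by (simp_all add: Gp_filt_half_iff Gp_filt_iff)
  note [simp] = Gp_components[OF xG] Gp_components[OF yG]
  have cross: "D.frob j (x (i - j)) \<otimes>\<^bsub>D\<^esub> y j = \<zero>\<^bsub>D\<^esub>" if j: "0 < j" "j < i" for j
  proof (cases "j \<le> m")
    case True
    then show ?thesis
      using y_low j by (simp add: D.comp_unit_def)
  next
    case False
    then consider "i - j \<le> m" | "i - j = Suc m"
      using i j by linarith
    then show ?thesis
    proof cases
      case 1
      then show ?thesis
        using x_low j by (simp add: D.comp_unit_def)
    next
      case 2
      then show ?thesis
        using frob_fst_zero[OF _ x_eps, of j] j by simp
    qed
  qed
  show ?thesis
    using D.comp_mult_eq_add[of x y i] cross i x_low y_low Gp_carrier_seq xG yG
    by (simp add: mult_Gp D.comp_unit_def carrier_Gp)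
qed

lemma Gp_mult_commute_half_half:
  assumes x: "x \<in> Gp_filt_half p R A m" and y: "y \<in> Gp_filt_half p R A m"
  shows "\<forall>i\<le>2 * m + 2. (x \<otimes>\<^bsub>G\<^esub> y) i = (y \<otimes>\<^bsub>G\<^esub> x) i"
proof (intro allI impI)
  fix i
  assume "i \<le> 2 * m + 2"
  moreover have xG: "x \<in> carrier G" and yG: "y \<in> carrier G"
    using x y by (simp_all add: Gp_filt_half_iff Gp_filt_iff)
  ultimately show "(x \<otimes>\<^bsub>G\<^esub> y) i = (y \<otimes>\<^bsub>G\<^esub> x) i"
    using Gp_mult_commute_low(1)[OF xG yG] Gp_mult_half_eq_add[OF x y] Gp_mult_half_eq_add[OF y x]
      Gp_components[OF xG] Gp_components[OF yG]
    by (cases "i = 0") (simp_all add: D.a_comm)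
qed

lemma Gp_filt_antimono: "N \<le> M \<Longrightarrow> Gp_filt p R A M \<subseteq> Gp_filt p R A N"
  by (auto simp: Gp_filt_iff)

lemma Gp_filt_Suc_subset_half: "Gp_filt p R A (Suc N) \<subseteq> Gp_filt_half p R A N"
  by (auto simp: Gp_filt_half_iff Gp_filt_iff D.comp_unit_def dual_ring_simps)

lemma comm_subgroup_Gp_carrier: "comm_subgroup G (carrier G) (carrier G) \<subseteq> Gp_filt_half p R A 0"
  unfolding comm_subgroup_def
  using Gp_mult_commute_low
  by (intro group.generate_subgroup_incl[OF Gp_group] subgroup_Gp_filt_half)
    (auto intro!: commutator_Gp_filt_half)

lemma comm_subgroup_Gp_filt_half:
  assumes "H \<subseteq> Gp_filt_half p R A k"
  shows "comm_subgroup G H (carrier G) \<subseteq> Gp_filt_half p R A (Suc k)"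
  unfolding comm_subgroup_def
proof (intro group.generate_subgroup_incl[OF Gp_group] subgroup_Gp_filt_half subsetI, clarify)
  fix h g
  assume "h \<in> H" and g: "g \<in> carrier G"
  then have h: "h \<in> Gp_filt_half p R A k"
    using assms by blast
  then show "h \<otimes>\<^bsub>G\<^esub> g \<otimes>\<^bsub>G\<^esub> inv\<^bsub>G\<^esub> h \<otimes>\<^bsub>G\<^esub> inv\<^bsub>G\<^esub> g \<in> Gp_filt_half p R A (Suc k)"
    using Gp_mult_commute_half[OF h g] Gp_mult_commute_half_next[OF h g] g
    by (intro commutator_Gp_filt_half) (auto simp: Gp_filt_half_iff Gp_filt_iff)
qed

lemma derived_Gp_filt_half:
  assumes "H \<subseteq> Gp_filt_half p R A m"
  shows "derived G H \<subseteq> Gp_filt p R A (2 * m + 2)"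
  unfolding derived_def
proof (intro group.generate_subgroup_incl[OF Gp_group] subgroup_Gp_filt subsetI, clarify)
  fix h g
  assume "h \<in> H" and "g \<in> H"
  then have h: "h \<in> Gp_filt_half p R A m" and g: "g \<in> Gp_filt_half p R A m"
    using assms by blast+
  then show "h \<otimes>\<^bsub>G\<^esub> g \<otimes>\<^bsub>G\<^esub> inv\<^bsub>G\<^esub> h \<otimes>\<^bsub>G\<^esub> inv\<^bsub>G\<^esub> g \<in> Gp_filt p R A (2 * m + 2)"
    using Gp_mult_commute_half_half[OF h g]
    by (intro commutator_Gp_filt) (auto simp: Gp_filt_half_iff Gp_filt_iff)
qed

lemma lower_central_Gp_subset: "lower_central G (Suc k) \<subseteq> Gp_filt_half p R A k"
proof (induction k)
  case 0
  show ?case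
    using comm_subgroup_Gp_carrier by (simp add: lower_central_def)
next
  case (Suc k)
  then show ?case
    using comm_subgroup_Gp_filt_half by (simp add: lower_central_def)
qed

lemma derived_series_1_Gp: "derived_series G 1 = lower_central G 1"
  by (simp add: derived_series_def lower_central_def derived_def comm_subgroup_def)

lemma derived_series_Gp_subset: "derived_series G (Suc (Suc k)) \<subseteq> Gp_filt p R A (2 * Suc k)"
proof (induction k)
  case 0
  have "derived_series G 1 \<subseteq> Gp_filt_half p R A 0"
    using derived_series_1_Gp lower_central_Gp_subset[of 0] by simp
  then have "derived G (derived_series G 1) \<subseteq> Gp_filt p R A (2 * 0 + 2)"
    by (rule derived_Gp_filt_half)
  then show ?case
    by (simp add: derived_series_def numeral_2_eq_2)
next
  case (Suc k)
  then have "derived_series G (Suc (Suc k)) \<subseteq> Gp_filt_half p R A (Suc (2 * k))"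
    using Gp_filt_Suc_subset_half by fastforce
  then have "derived G (derived_series G (Suc (Suc k))) \<subseteq> Gp_filt p R A (2 * Suc (2 * k) + 2)"
    by (rule derived_Gp_filt_half)
  also have "\<dots> \<subseteq> Gp_filt p R A (2 * Suc (Suc k))"
    by (rule Gp_filt_antimono) simp
  finally show ?case
    by (simp add: derived_series_def)
qed

end

theorem corollary3p3:
  fixes p :: nat and R :: "('a, 'b) ring_scheme" and A :: "int \<Rightarrow> 'a set"
  assumes "Factorial_Ring.prime p"
    and "graded_comm_algebra p R A"
  shows "derived_series (Gp p R A) 1 = lower_central (Gp p R A) 1
       \<and> lower_central (Gp p R A) 1 \<subseteq> Gp_filt_half p R A 0
       \<and> (\<forall>k::nat. k \<ge> 1 \<longrightarrow>
            derived_series (Gp p R A) (k + 1) \<subseteq> Gp_filt p R A (2 * k)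
          \<and> lower_central (Gp p R A) (k + 1) \<subseteq> Gp_filt_half p R A k)"
proof -
  have "ring R"
    using assms(2) unfolding graded_comm_algebra_def by (elim conjE)
  then interpret graded_Fp_algebra R p A
    using graded_Fp_algebra_axioms.intro[OF assms] by (rule graded_Fp_algebra.intro)
  show ?thesis
  proof (intro conjI allI impI)
    show "derived_series G 1 = lower_central G 1"
      by (rule derived_series_1_Gp)
    show "lower_central G 1 \<subseteq> Gp_filt_half p R A 0"
      using lower_central_Gp_subset[of 0] by simp
    fix k :: nat
    assume "1 \<le> k"
    then obtain l where k: "k = Suc l"
      using not0_implies_Suc by fastforce
    show "derived_series G (k + 1) \<subseteq> Gp_filt p R A (2 * k)"
      using derived_series_Gp_subset[of l] by (simp add: k)
    show "lower_central G (k + 1) \<subseteq> Gp_filt_half p R A k"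
      using lower_central_Gp_subset[of k] by simp
  qed
qed

end
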